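(* Let $T=(T,\eta,\mu)$ be a monad on a category $\mathbb{C}$. A morphism $f:A\rightsquigarrow B$ of $\mathsf{Kl}(T)$ is thunkable if and only if $\eta_{TB}\circ f^\sharp=T(\eta_B)\circ f^\sharp$ as morphisms $A\to TTB$ in $\mathbb{C}$.
   Context: $\mathsf{Kl}(T)$ has the objects of $\mathbb{C}$; morphisms $f:A\rightsquigarrow B$ correspond to $f^\sharp:A\to TB$; composition $(g\circledcirc f)^\sharp=\mu\circ T(g^\sharp)\circ f^\sharp$; identities $\eta$. Define $\mathsf{thunk}_A:A\rightsquigarrow TA$ by $\mathsf{thunk}_A^\sharp=\eta_{TA}\circ\eta_A$ and the functor $\tilde T:\mathsf{Kl}(T)\to\mathsf{Kl}(T)$ by $\tilde TA=TA$ and $(\tilde Tf)^\sharp=\eta_{TB}\circ\mu_B\circ T(f^\sharp)$. A morphism $f:A\rightsquigarrow B$ is thunkable if $\mathsf{thunk}_B\circledcirc f=\tilde Tf\circledcirc\mathsf{thunk}_A$. *)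

theory Defs
  imports Main
begin

text \<open>A (small) category presented by objects, arrows, domain, codomain,
  composition and identities.  comp g f is g after f.\<close>

record ('o, 'a) category =
  Obj  :: "'o set"
  Arr  :: "'a set"
  dom  :: "'a \<Rightarrow> 'o"
  cod  :: "'a \<Rightarrow> 'o"
  comp :: "'a \<Rightarrow> 'a \<Rightarrow> 'a"
  ident :: "'o \<Rightarrow> 'a"

definition hom :: "('o, 'a) category \<Rightarrow> 'o \<Rightarrow> 'o \<Rightarrow> 'a set" where
  "hom C A B = {f \<in> Arr C. dom C f = A \<and> cod C f = B}"

definition is_category :: "('o, 'a) category \<Rightarrow> bool" where
  "is_category C \<longleftrightarrow>
     (\<forall>f \<in> Arr C. dom C f \<in> Obj C \<and> cod C f \<in> Obj C) \<and>
     (\<forall>A \<in> Obj C. ident C A \<in> hom C A A) \<and>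
     (\<forall>A \<in> Obj C. \<forall>B \<in> Obj C. \<forall>D \<in> Obj C. \<forall>f \<in> hom C A B. \<forall>g \<in> hom C B D.
         comp C g f \<in> hom C A D) \<and>
     (\<forall>A \<in> Obj C. \<forall>B \<in> Obj C. \<forall>f \<in> hom C A B.
         comp C f (ident C A) = f \<and> comp C (ident C B) f = f) \<and>
     (\<forall>A \<in> Obj C. \<forall>B \<in> Obj C. \<forall>D \<in> Obj C. \<forall>E \<in> Obj C.
       \<forall>f \<in> hom C A B. \<forall>g \<in> hom C B D. \<forall>h \<in> hom C D E.
         comp C h (comp C g f) = comp C (comp C h g) f)"

text \<open>A monad (T, eta, mu) on C: TO is the object part of the endofunctor T,
  TA its arrow part.\<close>

definition is_monad ::
  "('o, 'a) category \<Rightarrow> ('o \<Rightarrow> 'o) \<Rightarrow> ('a \<Rightarrow> 'a) \<Rightarrow> ('o \<Rightarrow> 'a) \<Rightarrow> ('o \<Rightarrow> 'a) \<Rightarrow> bool" where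
  "is_monad C TO TA eta mu \<longleftrightarrow>
     is_category C \<and>
     \<comment> \<open>T is an endofunctor\<close>
     (\<forall>A \<in> Obj C. TO A \<in> Obj C) \<and>
     (\<forall>A \<in> Obj C. \<forall>B \<in> Obj C. \<forall>f \<in> hom C A B. TA f \<in> hom C (TO A) (TO B)) \<and>
     (\<forall>A \<in> Obj C. TA (ident C A) = ident C (TO A)) \<and>
     (\<forall>A \<in> Obj C. \<forall>B \<in> Obj C. \<forall>D \<in> Obj C. \<forall>f \<in> hom C A B. \<forall>g \<in> hom C B D.
         TA (comp C g f) = comp C (TA g) (TA f)) \<and>
     \<comment> \<open>eta : Id \<Rightarrow> T and mu : TT \<Rightarrow> T natural transformations\<close>
     (\<forall>A \<in> Obj C. eta A \<in> hom C A (TO A)) \<and>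
     (\<forall>A \<in> Obj C. mu A \<in> hom C (TO (TO A)) (TO A)) \<and>
     (\<forall>A \<in> Obj C. \<forall>B \<in> Obj C. \<forall>f \<in> hom C A B.
         comp C (TA f) (eta A) = comp C (eta B) f) \<and>
     (\<forall>A \<in> Obj C. \<forall>B \<in> Obj C. \<forall>f \<in> hom C A B.
         comp C (TA f) (mu A) = comp C (mu B) (TA (TA f))) \<and>
     \<comment> \<open>monad laws\<close>
     (\<forall>A \<in> Obj C. comp C (mu A) (eta (TO A)) = ident C (TO A)) \<and>
     (\<forall>A \<in> Obj C. comp C (mu A) (TA (eta A)) = ident C (TO A)) \<and>
     (\<forall>A \<in> Obj C. comp C (mu A) (TA (mu A)) = comp C (mu A) (mu (TO A)))"

text \<open>Kleisli morphisms f : A \<leadsto> B are represented by f^sharp \<in> hom C A (TO B).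
  Kleisli composition of g : B \<leadsto> D after f : A \<leadsto> B (target object D needed
  for mu).\<close>

definition kl_comp ::
  "('o, 'a) category \<Rightarrow> ('a \<Rightarrow> 'a) \<Rightarrow> ('o \<Rightarrow> 'a) \<Rightarrow> 'o \<Rightarrow> 'a \<Rightarrow> 'a \<Rightarrow> 'a" where
  "kl_comp C TA mu D g f = comp C (mu D) (comp C (TA g) f)"

definition thunk ::
  "('o, 'a) category \<Rightarrow> ('o \<Rightarrow> 'o) \<Rightarrow> ('o \<Rightarrow> 'a) \<Rightarrow> 'o \<Rightarrow> 'a" where
  "thunk C TO eta A = comp C (eta (TO A)) (eta A)"

definition kl_T ::
  "('o, 'a) category \<Rightarrow> ('o \<Rightarrow> 'o) \<Rightarrow> ('a \<Rightarrow> 'a) \<Rightarrow> ('o \<Rightarrow> 'a) \<Rightarrow> ('o \<Rightarrow> 'a) \<Rightarrow> 'o \<Rightarrow> 'a \<Rightarrow> 'a" where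
  "kl_T C TO TA eta mu B f = comp C (eta (TO B)) (comp C (mu B) (TA f))"

text \<open>Both sides are Kleisli morphisms A \<leadsto> TB, so the Kleisli multiplication used
  is mu_{TB}.\<close>
definition thunkable ::
  "('o, 'a) category \<Rightarrow> ('o \<Rightarrow> 'o) \<Rightarrow> ('a \<Rightarrow> 'a) \<Rightarrow> ('o \<Rightarrow> 'a) \<Rightarrow> ('o \<Rightarrow> 'a)
     \<Rightarrow> 'o \<Rightarrow> 'o \<Rightarrow> 'a \<Rightarrow> bool" where
  "thunkable C TO TA eta mu A B f \<longleftrightarrow>
     kl_comp C TA mu (TO B) (thunk C TO eta B) f =
     kl_comp C TA mu (TO B) (kl_T C TO TA eta mu B f) (thunk C TO eta A)"

end

theory Submission
  imports Defs
begin

text \<open>Both sides of the thunkability equation collapse by the unit laws of the monad.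
  On the left, \<open>\<mu>\<^sub>T\<^sub>B \<circ> T(\<eta>\<^sub>T\<^sub>B)\<close> is the identity, so \<open>(thunk\<^sub>B \<circledcirc> f)\<^sup>\<sharp> = T(\<eta>\<^sub>B) \<circ> f\<^sup>\<sharp>\<close>.
  On the right, Kleisli precomposition with \<open>thunk\<^sub>A\<close> is ordinary precomposition with
  \<open>\<eta>\<^sub>A\<close> (naturality of \<open>\<eta>\<close> and \<open>\<mu> \<circ> \<eta>\<^sub>T = id\<close>), and the same two facts give
  \<open>\<eta>\<^sub>T\<^sub>B \<circ> \<mu>\<^sub>B \<circ> T(f\<^sup>\<sharp>) \<circ> \<eta>\<^sub>A = \<eta>\<^sub>T\<^sub>B \<circ> f\<^sup>\<sharp>\<close>.\<close>

locale category_laws =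
  fixes C :: "('o, 'a) category"
  assumes is_category: "is_category C"
begin

abbreviation comp_C :: "'a \<Rightarrow> 'a \<Rightarrow> 'a" (infixr "\<cdot>" 55)
  where "g \<cdot> f \<equiv> comp C g f"

lemma hom_Obj:
  assumes "f \<in> hom C X Y"
  shows "X \<in> Obj C" and "Y \<in> Obj C"
  using assms is_category unfolding is_category_def hom_def by auto

lemma comp_in_hom:
  assumes "f \<in> hom C X Y" and "g \<in> hom C Y Z"
  shows "g \<cdot> f \<in> hom C X Z"
  using assms hom_Obj[OF assms(1)] hom_Obj[OF assms(2)] is_category
  unfolding is_category_def by blast

lemma comp_assoc:
  assumes "f \<in> hom C X Y" and "g \<in> hom C Y Z" and "h \<in> hom C Z W"
  shows "h \<cdot> (g \<cdot> f) = (h \<cdot> g) \<cdot> f"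
  using assms hom_Obj[OF assms(1)] hom_Obj[OF assms(2)] hom_Obj[OF assms(3)] is_category
  unfolding is_category_def by blast

lemma comp_ident_left:
  assumes "f \<in> hom C X Y"
  shows "ident C Y \<cdot> f = f"
  using assms hom_Obj[OF assms] is_category unfolding is_category_def by blast

end

locale monad_laws =
  fixes C :: "('o, 'a) category"
    and TO :: "'o \<Rightarrow> 'o"
    and TA :: "'a \<Rightarrow> 'a"
    and eta :: "'o \<Rightarrow> 'a"
    and mu :: "'o \<Rightarrow> 'a"
  assumes is_monad: "is_monad C TO TA eta mu"

sublocale monad_laws \<subseteq> category_laws C
  using is_monad by unfold_locales (simp add: is_monad_def)

context monad_laws
begin

lemma T_Obj: "X \<in> Obj C \<Longrightarrow> TO X \<in> Obj C"
  using is_monad unfolding is_monad_def by auto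

lemma T_hom: "f \<in> hom C X Y \<Longrightarrow> TA f \<in> hom C (TO X) (TO Y)"
  using is_monad hom_Obj[of f X Y] unfolding is_monad_def by auto

lemma T_comp:
  assumes "f \<in> hom C X Y" and "g \<in> hom C Y Z"
  shows "TA (g \<cdot> f) = TA g \<cdot> TA f"
  using assms is_monad hom_Obj[OF assms(1)] hom_Obj[OF assms(2)]
  unfolding is_monad_def by auto

lemma eta_hom: "X \<in> Obj C \<Longrightarrow> eta X \<in> hom C X (TO X)"
  using is_monad unfolding is_monad_def by auto

lemma mu_hom: "X \<in> Obj C \<Longrightarrow> mu X \<in> hom C (TO (TO X)) (TO X)"
  using is_monad unfolding is_monad_def by auto

lemma eta_natural: "f \<in> hom C X Y \<Longrightarrow> TA f \<cdot> eta X = eta Y \<cdot> f"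
  using is_monad hom_Obj[of f X Y] unfolding is_monad_def by auto

lemma mu_eta_T: "X \<in> Obj C \<Longrightarrow> mu X \<cdot> eta (TO X) = ident C (TO X)"
  using is_monad unfolding is_monad_def by auto

lemma mu_T_eta: "X \<in> Obj C \<Longrightarrow> mu X \<cdot> TA (eta X) = ident C (TO X)"
  using is_monad unfolding is_monad_def by auto

lemma mu_eta_T_comp:
  assumes h: "h \<in> hom C Y (TO X)" and X: "X \<in> Obj C"
  shows "mu X \<cdot> (eta (TO X) \<cdot> h) = h"
proof -
  have "mu X \<cdot> (eta (TO X) \<cdot> h) = (mu X \<cdot> eta (TO X)) \<cdot> h"
    using comp_assoc[OF h eta_hom[OF T_Obj[OF X]] mu_hom[OF X]] .
  then show ?thesis
    using mu_eta_T[OF X] comp_ident_left[OF h] by simp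
qed

lemma mu_T_eta_comp:
  assumes h: "h \<in> hom C Y (TO X)" and X: "X \<in> Obj C"
  shows "mu X \<cdot> (TA (eta X) \<cdot> h) = h"
proof -
  have "mu X \<cdot> (TA (eta X) \<cdot> h) = (mu X \<cdot> TA (eta X)) \<cdot> h"
    using comp_assoc[OF h T_hom[OF eta_hom[OF X]] mu_hom[OF X]] .
  then show ?thesis
    using mu_T_eta[OF X] comp_ident_left[OF h] by simp
qed

lemma kl_comp_thunk_left:
  assumes f: "f \<in> hom C A (TO B)" and B: "B \<in> Obj C"
  shows "kl_comp C TA mu (TO B) (thunk C TO eta B) f = TA (eta B) \<cdot> f"
proof -
  have TB: "TO B \<in> Obj C" using T_Obj[OF B] .
  have Teta_f: "TA (eta B) \<cdot> f \<in> hom C A (TO (TO B))"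
    using comp_in_hom[OF f T_hom[OF eta_hom[OF B]]] .
  have "kl_comp C TA mu (TO B) (thunk C TO eta B) f
      = mu (TO B) \<cdot> ((TA (eta (TO B)) \<cdot> TA (eta B)) \<cdot> f)"
    unfolding kl_comp_def thunk_def using T_comp[OF eta_hom[OF B] eta_hom[OF TB]] by simp
  also have "\<dots> = mu (TO B) \<cdot> (TA (eta (TO B)) \<cdot> (TA (eta B) \<cdot> f))"
    using comp_assoc[OF f T_hom[OF eta_hom[OF B]] T_hom[OF eta_hom[OF TB]]] by simp
  also have "\<dots> = TA (eta B) \<cdot> f"
    using mu_T_eta_comp[OF Teta_f TB] .
  finally show ?thesis .
qed

lemma kl_comp_thunk_right:
  assumes g: "g \<in> hom C (TO A) (TO D)" and A: "A \<in> Obj C" and D: "D \<in> Obj C"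
  shows "kl_comp C TA mu D g (thunk C TO eta A) = g \<cdot> eta A"
proof -
  have eA: "eta A \<in> hom C A (TO A)" using eta_hom[OF A] .
  have gA: "g \<cdot> eta A \<in> hom C A (TO D)" using comp_in_hom[OF eA g] .
  have "kl_comp C TA mu D g (thunk C TO eta A) = mu D \<cdot> ((TA g \<cdot> eta (TO A)) \<cdot> eta A)"
    unfolding kl_comp_def thunk_def
    using comp_assoc[OF eA eta_hom[OF T_Obj[OF A]] T_hom[OF g]] by simp
  also have "\<dots> = mu D \<cdot> (eta (TO D) \<cdot> (g \<cdot> eta A))"
    using eta_natural[OF g] comp_assoc[OF eA g eta_hom[OF T_Obj[OF D]]] by simp
  also have "\<dots> = g \<cdot> eta A"
    using mu_eta_T_comp[OF gA D] .
  finally show ?thesis .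
qed

lemma kl_T_hom:
  assumes f: "f \<in> hom C A (TO B)" and B: "B \<in> Obj C"
  shows "kl_T C TO TA eta mu B f \<in> hom C (TO A) (TO (TO B))"
  unfolding kl_T_def
  using comp_in_hom[OF comp_in_hom[OF T_hom[OF f] mu_hom[OF B]] eta_hom[OF T_Obj[OF B]]] .

lemma kl_T_comp_eta:
  assumes f: "f \<in> hom C A (TO B)" and B: "B \<in> Obj C"
  shows "kl_T C TO TA eta mu B f \<cdot> eta A = eta (TO B) \<cdot> f"
proof -
  have eA: "eta A \<in> hom C A (TO A)" using eta_hom[OF hom_Obj(1)[OF f]] .
  have muTf: "mu B \<cdot> TA f \<in> hom C (TO A) (TO B)" using comp_in_hom[OF T_hom[OF f] mu_hom[OF B]] .
  have "kl_T C TO TA eta mu B f \<cdot> eta A = eta (TO B) \<cdot> (mu B \<cdot> (TA f \<cdot> eta A))"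
    unfolding kl_T_def
    using comp_assoc[OF eA muTf eta_hom[OF T_Obj[OF B]]] comp_assoc[OF eA T_hom[OF f] mu_hom[OF B]]
    by simp
  also have "\<dots> = eta (TO B) \<cdot> (mu B \<cdot> (eta (TO B) \<cdot> f))"
    using eta_natural[OF f] by simp
  also have "\<dots> = eta (TO B) \<cdot> f"
    using mu_eta_T_comp[OF f B] by simp
  finally show ?thesis .
qed

end

theorem proposition3p13:
  fixes C :: "('o, 'a) category"
  assumes "is_monad C TO TA eta mu"
    and "A \<in> Obj C" and "B \<in> Obj C"
    and "f \<in> hom C A (TO B)"
  shows "thunkable C TO TA eta mu A B f \<longleftrightarrow>
         comp C (eta (TO B)) f = comp C (TA (eta B)) f"
proof -
  interpret monad_laws C TO TA eta mu by (rule monad_laws.intro) fact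
  have "kl_comp C TA mu (TO B) (thunk C TO eta B) f = TA (eta B) \<cdot> f"
    using kl_comp_thunk_left assms by blast
  moreover have "kl_comp C TA mu (TO B) (kl_T C TO TA eta mu B f) (thunk C TO eta A)
      = eta (TO B) \<cdot> f"
    using kl_comp_thunk_right[OF kl_T_hom] kl_T_comp_eta T_Obj assms by simp
  ultimately show ?thesis
    unfolding thunkable_def by auto
qed

end
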